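(* Let $F$ be an almost-bipartite graph, let $b$ be an integer with $b>|F|$, and let $H$ be a graph. Then $H\vee bK_1$ is $F$-free if and only if $H\in\mathcal{M}_F$.
   Context: All graphs are finite and simple. $H\vee bK_1$ is the join of $H$ with an independent set of $b$ vertices (every vertex of $H$ adjacent to every one of the $b$ new vertices). A graph $F$ is almost-bipartite if it can be made bipartite by removing at most one edge. For such $F$, $\mathcal{A}_F$ is the family of subgraphs of $F$ induced by $V(F)\setminus I$, where $I$ ranges over all maximal independent sets of $F$; $\mathcal{M}_F$ is the family of all graphs (possibly with isolated vertices) containing no subgraph isomorphic to a member of $\mathcal{A}_F$. $F$-free means no subgraph isomorphic to $F$; $|F|$ is the number of vertices of $F$. *)

theory Defs
  imports Main
begin

type_synonym 'a graph = "'a set \<times> 'a set set"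

definition verts :: "'a graph \<Rightarrow> 'a set" where "verts G = fst G"
definition edges :: "'a graph \<Rightarrow> 'a set set" where "edges G = snd G"

definition graph :: "'a graph \<Rightarrow> bool" where
  "graph G \<longleftrightarrow> finite (verts G) \<and>
     (\<forall>e\<in>edges G. \<exists>u v. u \<noteq> v \<and> u \<in> verts G \<and> v \<in> verts G \<and> e = {u, v})"

definition contains_subgraph :: "'b graph \<Rightarrow> 'a graph \<Rightarrow> bool" where
  "contains_subgraph H G \<longleftrightarrow>
     (\<exists>f. inj_on f (verts G) \<and> f ` verts G \<subseteq> verts H \<and>
          (\<forall>e\<in>edges G. f ` e \<in> edges H))"

definition free :: "'b graph \<Rightarrow> 'a graph \<Rightarrow> bool" where
  "free H F \<longleftrightarrow> \<not> contains_subgraph H F"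

definition bipartite :: "'a graph \<Rightarrow> bool" where
  "bipartite G \<longleftrightarrow> (\<exists>A. \<forall>e\<in>edges G. \<exists>u v. e = {u, v} \<and> u \<in> A \<and> v \<notin> A)"

definition almost_bipartite :: "'a graph \<Rightarrow> bool" where
  "almost_bipartite G \<longleftrightarrow>
     (\<exists>E'. E' \<subseteq> edges G \<and> card (edges G - E') \<le> 1 \<and> bipartite (verts G, E'))"

definition independent :: "'a graph \<Rightarrow> 'a set \<Rightarrow> bool" where
  "independent G I \<longleftrightarrow> I \<subseteq> verts G \<and> (\<forall>e\<in>edges G. \<not> e \<subseteq> I)"

definition maximal_independent :: "'a graph \<Rightarrow> 'a set \<Rightarrow> bool" where
  "maximal_independent G I \<longleftrightarrow> independent G I \<and>
     (\<forall>J. independent G J \<and> I \<subseteq> J \<longrightarrow> J = I)"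

definition induced :: "'a graph \<Rightarrow> 'a set \<Rightarrow> 'a graph" where
  "induced G S = (S, {e\<in>edges G. e \<subseteq> S})"

definition A_family :: "'a graph \<Rightarrow> 'a graph set" where
  "A_family F = {induced F (verts F - I) | I. maximal_independent F I}"

definition in_M_family :: "'a graph \<Rightarrow> 'b graph \<Rightarrow> bool" where
  "in_M_family F H \<longleftrightarrow> (\<forall>A\<in>A_family F. \<not> contains_subgraph H A)"

definition join_indep :: "'a graph \<Rightarrow> nat \<Rightarrow> ('a + nat) graph" where
  "join_indep H b =
     (Inl ` verts H \<union> Inr ` {0..<b},
      ((\<lambda>e. Inl ` e) ` edges H) \<union> {{Inl v, Inr i} | v i. v \<in> verts H \<and> i < b})"

end

theory Submission
  imports Defs
begin

text \<open>An embedding of \<open>F\<close> into \<open>H \<or> bK\<^sub>1\<close> sends the vertices landing in the new independent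
  set to an independent set of \<open>F\<close>; enlarging it to a maximal independent set \<open>I\<close> leaves the
  rest of \<open>F\<close> embedded in \<open>H\<close>, i.e. \<open>H\<close> contains \<open>F - I\<close>, a member of \<open>\<A>\<^sub>F\<close>. Conversely, an
  embedding of \<open>F - I\<close> into \<open>H\<close> extends to one of \<open>F\<close> by sending \<open>I\<close> injectively to the
  \<open>b \<ge> |I|\<close> new vertices, since every edge of \<open>F\<close> meeting \<open>I\<close> has its other end outside \<open>I\<close>.\<close>

lemma verts_induced [simp]: "verts (induced G S) = S"
  by (simp add: induced_def verts_def)

lemma edges_induced [simp]: "edges (induced G S) = {e \<in> edges G. e \<subseteq> S}"
  by (simp add: induced_def edges_def)

lemma verts_join_indep: "verts (join_indep H b) = Inl ` verts H \<union> Inr ` {0..<b}"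
  by (simp add: join_indep_def verts_def)

lemma edges_join_indep:
  "edges (join_indep H b) =
     (image Inl) ` edges H \<union> {{Inl v, Inr i} | v i. v \<in> verts H \<and> i < b}"
  by (simp add: join_indep_def edges_def)

lemma Inl_image_in_edges_join_indep_iff:
  "Inl ` e \<in> edges (join_indep H b) \<longleftrightarrow> e \<in> edges H"
  by (auto simp: edges_join_indep inj_image_eq_iff doubleton_eq_iff)

lemma Inl_Inr_in_edges_join_indep_iff:
  "{Inl v, Inr i} \<in> edges (join_indep H b) \<longleftrightarrow> v \<in> verts H \<and> i < b"
  by (auto simp: edges_join_indep doubleton_eq_iff)

lemma Inr_Inr_notin_edges_join_indep: "{Inr i, Inr j} \<notin> edges (join_indep H b)"
  by (auto simp: edges_join_indep doubleton_eq_iff)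

lemma edge_graphE:
  assumes "graph G" and "e \<in> edges G"
  obtains u v where "u \<noteq> v" "u \<in> verts G" "v \<in> verts G" "e = {u, v}"
  using assms unfolding graph_def by blast

lemma maximal_independent_superset:
  assumes "finite (verts G)" and "independent G J"
  obtains I where "maximal_independent G I" and "J \<subseteq> I"
proof -
  let ?S = "{I. independent G I \<and> J \<subseteq> I}"
  have fin: "finite ?S"
    by (rule finite_subset[of _ "Pow (verts G)"]) (auto simp: independent_def assms(1))
  moreover have "J \<in> ?S" using assms(2) by simp
  ultimately have "Max (card ` ?S) \<in> card ` ?S" by (intro Max_in) auto
  then obtain I where I: "I \<in> ?S" and "card I = Max (card ` ?S)" by auto
  with fin have I_max: "card K \<le> card I" if "K \<in> ?S" for K using that by simp
  have "maximal_independent G I"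
    unfolding maximal_independent_def
  proof (intro conjI allI impI)
    show "independent G I" using I by simp
    fix K assume K: "independent G K \<and> I \<subseteq> K"
    then have "finite K" using assms(1) finite_subset by (auto simp: independent_def)
    with K I I_max[of K] show "K = I" using card_seteq[of K I] by auto
  qed
  with I that show thesis by blast
qed

lemma contains_join_indep_if_contains_complement:
  assumes "graph F" and "independent F I" and "card I \<le> b"
    and "contains_subgraph H (induced F (verts F - I))"
  shows "contains_subgraph (join_indep H b) F"
proof -
  obtain g where g_inj: "inj_on g (verts F - I)" and g_verts: "g ` (verts F - I) \<subseteq> verts H"
    and g_edges: "\<And>e. e \<in> edges F \<Longrightarrow> e \<subseteq> verts F - I \<Longrightarrow> g ` e \<in> edges H"
    using assms(4) unfolding contains_subgraph_def by auto
  have "finite I"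
    using assms(1,2) finite_subset by (auto simp: graph_def independent_def)
  with assms(3) obtain h where h_range: "h ` I \<subseteq> {0..<b}" and h_inj: "inj_on h I"
    using card_le_inj[of I "{0..<b}"] by auto
  define f where "f v = (if v \<in> I then Inr (h v) else Inl (g v))" for v
  have "f ` e \<in> edges (join_indep H b)" if e: "e \<in> edges F" for e
  proof -
    obtain u v where uv: "u \<noteq> v" "u \<in> verts F" "v \<in> verts F" "e = {u, v}"
      using edge_graphE[OF assms(1) e] .
    have "\<not> (u \<in> I \<and> v \<in> I)"
      using assms(2) e uv(4) by (auto simp: independent_def)
    then consider "u \<in> I" "v \<notin> I" | "u \<notin> I" "v \<in> I" | "u \<notin> I" "v \<notin> I" by blast
    then show ?thesis
    proof cases
      case 1
      then show ?thesis using uv g_verts h_range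
        by (auto simp: f_def insert_commute Inl_Inr_in_edges_join_indep_iff)
    next
      case 2
      then show ?thesis using uv g_verts h_range
        by (auto simp: f_def Inl_Inr_in_edges_join_indep_iff)
    next
      case 3
      have "f ` e = Inl ` g ` e" using 3 uv(4) by (simp add: f_def)
      moreover have "e \<subseteq> verts F - I" using 3 uv by auto
      then have "g ` e \<in> edges H" using e g_edges by blast
      ultimately show ?thesis by (simp add: Inl_image_in_edges_join_indep_iff)
    qed
  qed
  moreover have "inj_on f (verts F)"
    using g_inj h_inj unfolding inj_on_def f_def by auto
  moreover have "f ` verts F \<subseteq> verts (join_indep H b)"
    using g_verts h_range by (auto simp: f_def verts_join_indep)
  ultimately show ?thesis unfolding contains_subgraph_def by blast
qed

lemma contains_complement_if_contains_join_indep: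
  assumes "graph F" and "contains_subgraph (join_indep H b) F"
  obtains I where "maximal_independent F I"
    and "contains_subgraph H (induced F (verts F - I))"
proof -
  obtain f where f_inj: "inj_on f (verts F)" and f_verts: "f ` verts F \<subseteq> verts (join_indep H b)"
    and f_edges: "\<And>e. e \<in> edges F \<Longrightarrow> f ` e \<in> edges (join_indep H b)"
    using assms(2) unfolding contains_subgraph_def by auto
  define J where "J = {v \<in> verts F. \<not> isl (f v)}"
  have "independent F J"
    unfolding independent_def
  proof (intro conjI ballI notI)
    show "J \<subseteq> verts F" by (auto simp: J_def)
    fix e assume e: "e \<in> edges F" and "e \<subseteq> J"
    obtain u v where "e = {u, v}" using edge_graphE[OF assms(1) e] by metis
    with \<open>e \<subseteq> J\<close> have "\<not> isl (f u)" "\<not> isl (f v)" by (auto simp: J_def)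
    with \<open>e = {u, v}\<close> show False
      using f_edges[OF e] Inr_Inr_notin_edges_join_indep[of "projr (f u)" "projr (f v)" H b]
      by (simp add: sum.collapse)
  qed
  moreover have "finite (verts F)" using assms(1) by (simp add: graph_def)
  ultimately obtain I where I: "maximal_independent F I" and "J \<subseteq> I"
    using maximal_independent_superset by blast
  then have f_Inl: "f v = Inl (projl (f v))" if "v \<in> verts F - I" for v
    using that by (auto simp: J_def sum.collapse)
  define g where "g v = projl (f v)" for v
  have "inj_on g (verts F - I)"
    using f_inj f_Inl unfolding inj_on_def g_def by (metis Diff_iff)
  moreover have "g ` (verts F - I) \<subseteq> verts H"
    using f_verts f_Inl by (fastforce simp: g_def verts_join_indep)
  moreover have "g ` e \<in> edges H" if "e \<in> edges F" "e \<subseteq> verts F - I" for e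
  proof -
    have "f ` e = Inl ` g ` e" using that(2) f_Inl by (force simp: g_def)
    then show ?thesis
      using f_edges[OF that(1)] by (simp add: Inl_image_in_edges_join_indep_iff)
  qed
  ultimately have "contains_subgraph H (induced F (verts F - I))"
    unfolding contains_subgraph_def by auto
  with I that show thesis by blast
qed

lemma contains_subgraph_join_indep_iff:
  assumes "graph F" and "card (verts F) \<le> b"
  shows "contains_subgraph (join_indep H b) F \<longleftrightarrow> (\<exists>A \<in> A_family F. contains_subgraph H A)"
proof
  assume "contains_subgraph (join_indep H b) F"
  then show "\<exists>A \<in> A_family F. contains_subgraph H A"
    using contains_complement_if_contains_join_indep[OF assms(1)] unfolding A_family_def by blast
next
  assume "\<exists>A \<in> A_family F. contains_subgraph H A"
  then obtain I where I: "maximal_independent F I"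
    and "contains_subgraph H (induced F (verts F - I))"
    unfolding A_family_def by blast
  moreover have "card I \<le> b"
    using I assms card_mono[of "verts F" I] by (auto simp: graph_def maximal_independent_def independent_def)
  ultimately show "contains_subgraph (join_indep H b) F"
    using contains_join_indep_if_contains_complement assms(1) maximal_independent_def by blast
qed

theorem lemma4p2:
  fixes F :: "'a graph" and H :: "'b graph" and b :: nat
  assumes "graph F" and "almost_bipartite F"
    and "b > card (verts F)"
    and "graph H"
  shows "free (join_indep H b) F \<longleftrightarrow> in_M_family F H"
  using contains_subgraph_join_indep_iff[OF assms(1), of b H] assms(3)
  unfolding free_def in_M_family_def by auto

end
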